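(* For every $\alpha\ge0$ and $\beta\ge1$, the Sharma-Mittal entropy $S_{\alpha,\beta}$ is subadditive on the majorization lattice: for all $\mathbf{p},\mathbf{q}\in\mathcal{P}_n$, $$S_{\alpha,\beta}(\mathbf{p}\wedge\mathbf{q})\le S_{\alpha,\beta}(\mathbf{p})+S_{\alpha,\beta}(\mathbf{q}).$$
   Context: $\mathcal{P}_n=\{\mathbf{p}=(p_1,\dots,p_n): p_i\ge0,\ \sum_i p_i=1\}$, with all vectors taken with components in non-increasing order. Majorization: $\mathbf{p}\preceq\mathbf{q}$ iff $\sum_{i=1}^k p_i\le\sum_{i=1}^k q_i$ for all $k$. The greatest lower bound in the lattice $(\mathcal{P}_n,\preceq)$ is $\mathbf{p}\wedge\mathbf{q}=\mathbf{r}$ with $\sum_{i=1}^k r_i=\min\{\sum_{i=1}^k p_i,\sum_{i=1}^k q_i\}$ for $k=1,\dots,n$. The Sharma-Mittal entropy is $S_{\alpha,\beta}(\mathbf{p})=\frac{1}{1-\beta}\left[\left(\sum_{i=1}^n p_i^\alpha\right)^{\frac{1-\beta}{1-\alpha}}-1\right]$, with values at $\alpha=1$ and/or $\beta=1$ defined by the corresponding limits. *)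

theory Defs
  imports Complex_Main
begin

definition prob_vec :: "nat \<Rightarrow> (nat \<Rightarrow> real) \<Rightarrow> bool" where
  "prob_vec n p \<longleftrightarrow> (\<forall>i<n. 0 \<le> p i) \<and> (\<Sum>i<n. p i) = 1 \<and>
     (\<forall>i j. i \<le> j \<longrightarrow> j < n \<longrightarrow> p j \<le> p i)"

text \<open>Meet in the majorization lattice: the partial sums of the meet are the
  minima of the partial sums.\<close>
definition maj_meet :: "(nat \<Rightarrow> real) \<Rightarrow> (nat \<Rightarrow> real) \<Rightarrow> nat \<Rightarrow> real" where
  "maj_meet p q i =
     min (\<Sum>j<Suc i. p j) (\<Sum>j<Suc i. q j) - min (\<Sum>j<i. p j) (\<Sum>j<i. q j)"

text \<open>Shannon entropy (natural log; 0 ln 0 = 0 since ln 0 = 0 in Isabelle).\<close>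
definition shannon :: "nat \<Rightarrow> (nat \<Rightarrow> real) \<Rightarrow> real" where
  "shannon n p = - (\<Sum>i<n. p i * ln (p i))"

text \<open>Sharma-Mittal entropy, with the limiting cases alpha = 1 and/or beta = 1.
  Powers are taken with powr, so 0 powr a = 0 (zero components contribute nothing,
  also for alpha = 0).\<close>
definition sharma_mittal :: "real \<Rightarrow> real \<Rightarrow> nat \<Rightarrow> (nat \<Rightarrow> real) \<Rightarrow> real" where
  "sharma_mittal \<alpha> \<beta> n p =
     (if \<alpha> \<noteq> 1 \<and> \<beta> \<noteq> 1 then
        (1 / (1 - \<beta>)) * ((\<Sum>i<n. p i powr \<alpha>) powr ((1 - \<beta>) / (1 - \<alpha>)) - 1)
      else if \<alpha> = 1 \<and> \<beta> \<noteq> 1 then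
        (1 / (1 - \<beta>)) * (exp ((1 - \<beta>) * shannon n p) - 1)
      else if \<alpha> \<noteq> 1 \<and> \<beta> = 1 then
        (1 / (1 - \<alpha>)) * ln (\<Sum>i<n. p i powr \<alpha>)
      else shannon n p)"

end

theory Submission
  imports Defs "HOL-Analysis.Convex"
begin

text \<open>The product distribution \<open>p \<otimes> q = (p\<^sub>i q\<^sub>j)\<close> on \<open>n\<^sup>2\<close> cells is majorized by
  \<open>p \<and> q\<close>: any \<open>k\<close> cells lie in at most \<open>k\<close> rows and at most \<open>k\<close> columns, so their total
  mass is at most the minimum of the \<open>k\<close>-th partial sums of \<open>p\<close> and \<open>q\<close>, which is the
  \<open>k\<close>-th partial sum of \<open>p \<and> q\<close>. By Karamata's inequality every concave \<open>\<phi>\<close> with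
  \<open>\<phi> 0 = 0\<close> then satisfies \<open>\<Sum>\<^sub>k \<phi> ((p \<and> q)\<^sub>k) \<le> \<Sum>\<^sub>i\<^sub>j \<phi> (p\<^sub>i q\<^sub>j)\<close>. For
  \<open>\<phi> y = -y ln y\<close> and \<open>\<phi> y = \<plusminus>y\<^sup>\<alpha>\<close> this says that the Renyi entropy \<open>R\<^sub>\<alpha>\<close> of \<open>p \<and> q\<close>
  is at most that of \<open>p \<otimes> q\<close>, namely \<open>R\<^sub>\<alpha> p + R\<^sub>\<alpha> q\<close>. Finally
  \<open>S\<^sub>\<alpha>\<^sub>,\<^sub>\<beta> = g\<^sub>\<beta> \<circ> R\<^sub>\<alpha>\<close> with \<open>g\<^sub>\<beta> x = (exp ((1 - \<beta>) x) - 1) / (1 - \<beta>)\<close>, which for \<open>\<beta> \<ge> 1\<close> is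
  nondecreasing and subadditive on \<open>[0, \<infinity>)\<close>, where the Renyi entropies lie.\<close>

lemma concave_on_nonneg_if_star_shaped:
  fixes f :: "real \<Rightarrow> real"
  assumes "concave_on {0<..} f" "f 0 = 0"
    and "\<And>x u. 0 < x \<Longrightarrow> 0 \<le> u \<Longrightarrow> u \<le> 1 \<Longrightarrow> u * f x \<le> f (u * x)"
  shows "concave_on {0..} f"
proof (rule concave_on_linorderI)
  fix t x y :: real
  assume t: "0 < t" "t < 1" and xy: "x \<in> {0..}" "y \<in> {0..}" "x < y"
  show "(1 - t) * f x + t * f y \<le> f ((1 - t) *\<^sub>R x + t *\<^sub>R y)"
  proof (cases "x = 0")
    case True
    have "t * f y \<le> f (t * y)" using t xy True by (intro assms(3)) auto
    then show ?thesis using assms(2) True by simp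
  next
    case False
    then show ?thesis using concave_onD[OF assms(1), of t x y] t xy by simp
  qed
qed simp

lemma concave_on_powr:
  assumes "0 \<le> a" "a \<le> 1"
  shows "concave_on {0..} (\<lambda>y::real. y powr a)"
proof (rule concave_on_nonneg_if_star_shaped)
  show "concave_on {0<..} (\<lambda>y::real. y powr a)"
  proof (rule f''_le0_imp_concave[where f' = "\<lambda>x. a * x powr (a - 1)"
        and f'' = "\<lambda>x. a * ((a - 1) * x powr (a - 1 - 1))"])
    fix x :: real assume "x \<in> {0<..}"
    then show "DERIV (\<lambda>y. y powr a) x :> a * x powr (a - 1)"
      by (intro has_real_derivative_powr) simp
    show "DERIV (\<lambda>x. a * x powr (a - 1)) x :> a * ((a - 1) * x powr (a - 1 - 1))"
      using \<open>x \<in> {0<..}\<close> by (intro DERIV_cmult has_real_derivative_powr) simp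
    show "a * ((a - 1) * x powr (a - 1 - 1)) \<le> 0"
      using assms by (simp add: mult_nonneg_nonpos mult_nonpos_nonneg)
  qed simp
  fix x u :: real assume "0 < x" "0 \<le> u" "u \<le> 1"
  have "u \<le> u powr a"
    using powr_mono'[of a 1 u] \<open>0 \<le> u\<close> \<open>u \<le> 1\<close> assms by (cases "u = 0") auto
  then have "u * x powr a \<le> u powr a * x powr a"
    by (rule mult_right_mono) simp
  then show "u * x powr a \<le> (u * x) powr a"
    by (simp add: powr_mult)
qed simp

lemma concave_on_neg_powr:
  assumes "1 \<le> a"
  shows "concave_on {0..} (\<lambda>y::real. - (y powr a))"
proof (rule concave_on_nonneg_if_star_shaped)
  show "concave_on {0<..} (\<lambda>y::real. - (y powr a))"
    using powr_convex[OF assms] by (simp add: concave_on_def)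
  fix x u :: real assume "0 < x" "0 \<le> u" "u \<le> 1"
  have "u powr a \<le> u"
    using powr_le_one_le[of u a] \<open>0 \<le> u\<close> \<open>u \<le> 1\<close> assms by (cases "u = 0") auto
  then have "u powr a * x powr a \<le> u * x powr a"
    by (rule mult_right_mono) simp
  then show "u * - (x powr a) \<le> - ((u * x) powr a)"
    by (simp add: powr_mult)
qed simp

lemma concave_on_neg_mult_ln:
  "concave_on {0..} (\<lambda>y::real. - (y * ln y))"
proof (rule concave_on_nonneg_if_star_shaped)
  show "concave_on {0<..} (\<lambda>y::real. - (y * ln y))"
    by (rule f''_le0_imp_concave[where f' = "\<lambda>x. - (ln x + 1)" and f'' = "\<lambda>x. - (1 / x)"])
      (auto intro!: derivative_eq_intros)
  fix x u :: real assume "0 < x" "0 \<le> u" "u \<le> 1"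
  then have "u * x * ln u \<le> 0"
    by (cases "u = 0") (auto intro: mult_nonneg_nonpos)
  then show "u * - (x * ln x) \<le> - (u * x * ln (u * x))"
    using \<open>0 < x\<close> by (simp add: ln_mult algebra_simps)
qed simp

lemma secant_le_concave:
  fixes \<phi> :: "real \<Rightarrow> real"
  assumes "concave_on {0..} \<phi>" "\<phi> 0 = 0" "0 \<le> y" "y \<le> t" "0 < t"
  shows "y / t * \<phi> t \<le> \<phi> y"
  using concave_onD[OF assms(1), of "y / t" 0 t] assms by simp

lemma concave_le_secant:
  fixes \<phi> :: "real \<Rightarrow> real"
  assumes "concave_on {0..} \<phi>" "\<phi> 0 = 0" "0 < t" "t \<le> z"
  shows "\<phi> z \<le> z / t * \<phi> t"
proof -
  have "t / z * \<phi> z \<le> \<phi> t"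
    using secant_le_concave[OF assms(1,2), of t z] assms by simp
  then show ?thesis
    using assms by (simp add: field_simps)
qed

definition secant_shift :: "(real \<Rightarrow> real) \<Rightarrow> real \<Rightarrow> real \<Rightarrow> real" where
  "secant_shift \<phi> t u = \<phi> (u + t) - \<phi> t / t * (u + t)"

lemma secant_shift_zero: "t \<noteq> 0 \<Longrightarrow> secant_shift \<phi> t 0 = 0"
  by (simp add: secant_shift_def)

lemma concave_on_secant_shift:
  assumes "concave_on {0..} \<phi>" "0 \<le> t"
  shows "concave_on {0..} (secant_shift \<phi> t)"
  unfolding concave_on_iff
proof (intro conjI ballI allI impI)
  fix x y u v :: real
  assume "x \<in> {0..}" "y \<in> {0..}" "0 \<le> u" "0 \<le> v" "u + v = 1"
  moreover from \<open>u + v = 1\<close> have v: "v = 1 - u" by simp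
  moreover have "u *\<^sub>R (x + t) + v *\<^sub>R (y + t) = u * x + v * y + t"
    by (simp add: v algebra_simps)
  ultimately have concave: "u * \<phi> (x + t) + v * \<phi> (y + t) \<le> \<phi> (u * x + v * y + t)"
    using concave_on_iff[THEN iffD1, OF assms(1)] assms(2)
    by (metis atLeast_iff add_nonneg_nonneg)
  define c where "c = \<phi> t / t"
  have linear: "u * (c * (x + t)) + v * (c * (y + t)) = c * (u * x + v * y + t)"
    by (simp add: v algebra_simps)
  show "u * secant_shift \<phi> t x + v * secant_shift \<phi> t y
      \<le> secant_shift \<phi> t (u *\<^sub>R x + v *\<^sub>R y)"
    unfolding secant_shift_def c_def[symmetric] real_scaleR_def right_diff_distrib
    using concave linear by linarith
qed simp

lemma secant_shift_nonpos:
  assumes "concave_on {0..} \<phi>" "\<phi> 0 = 0" "0 < t" "0 \<le> u"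
  shows "secant_shift \<phi> t u \<le> 0"
  using concave_le_secant[OF assms(1,2,3), of "u + t"] assms
  by (simp add: secant_shift_def field_simps)

lemma secant_shift_decomposition:
  assumes "concave_on {0..} \<phi>" "\<phi> 0 = 0" "0 < t" "0 \<le> y"
  shows "secant_shift \<phi> t (max 0 (y - t)) + \<phi> t / t * y \<le> \<phi> y"
    and "y = 0 \<or> t \<le> y \<Longrightarrow> secant_shift \<phi> t (max 0 (y - t)) + \<phi> t / t * y = \<phi> y"
proof -
  show "y = 0 \<or> t \<le> y \<Longrightarrow> secant_shift \<phi> t (max 0 (y - t)) + \<phi> t / t * y = \<phi> y"
    using assms by (auto simp: secant_shift_def)
  show "secant_shift \<phi> t (max 0 (y - t)) + \<phi> t / t * y \<le> \<phi> y"
  proof (cases "t \<le> y")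
    case True
    then show ?thesis by (simp add: secant_shift_def)
  next
    case False
    then show ?thesis
      using secant_le_concave[OF assms(1,2,4), of t] assms
      by (simp add: secant_shift_zero mult.commute)
  qed
qed

lemma karamata_secant_shift_step:
  fixes \<phi> :: "real \<Rightarrow> real" and x :: "'a \<Rightarrow> real" and r :: "'b \<Rightarrow> real"
  assumes concave: "concave_on {0..} \<phi>" and zero: "\<phi> 0 = 0" and "0 < t"
    and "\<forall>a\<in>A. 0 \<le> x a" "\<forall>b\<in>B. r b = 0 \<or> t \<le> r b"
    and "(\<Sum>a\<in>A. x a) \<le> (\<Sum>b\<in>B. r b)"
    and "(\<Sum>a\<in>A. x a) = (\<Sum>b\<in>B. r b) \<or> (\<forall>y\<ge>0. \<phi> y \<le> 0)"
    and shifted: "(\<Sum>b\<in>B. secant_shift \<phi> t (max 0 (r b - t)))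
      \<le> (\<Sum>a\<in>A. secant_shift \<phi> t (max 0 (x a - t)))"
  shows "(\<Sum>b\<in>B. \<phi> (r b)) \<le> (\<Sum>a\<in>A. \<phi> (x a))"
proof -
  define c where "c = \<phi> t / t"
  have "c * (\<Sum>b\<in>B. r b) \<le> c * (\<Sum>a\<in>A. x a)"
  proof (cases "(\<Sum>a\<in>A. x a) = (\<Sum>b\<in>B. r b)")
    case False
    then have "c \<le> 0"
      using assms(7) \<open>0 < t\<close> by (auto simp: c_def divide_nonpos_pos)
    then show ?thesis using assms(6) by (simp add: mult_left_mono_neg)
  qed simp
  have "\<phi> (r b) = secant_shift \<phi> t (max 0 (r b - t)) + c * r b" if "b \<in> B" for b
    using secant_shift_decomposition(2)[OF concave zero \<open>0 < t\<close>, of "r b"] assms(3,5) that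
    by (force simp: c_def)
  then have "(\<Sum>b\<in>B. \<phi> (r b))
      = (\<Sum>b\<in>B. secant_shift \<phi> t (max 0 (r b - t))) + c * (\<Sum>b\<in>B. r b)"
    by (simp add: sum.distrib sum_distrib_left)
  also have "\<dots> \<le> (\<Sum>a\<in>A. secant_shift \<phi> t (max 0 (x a - t))) + c * (\<Sum>a\<in>A. x a)"
    using shifted \<open>c * (\<Sum>b\<in>B. r b) \<le> c * (\<Sum>a\<in>A. x a)\<close> by simp
  also have "\<dots> = (\<Sum>a\<in>A. secant_shift \<phi> t (max 0 (x a - t)) + c * x a)"
    by (simp add: sum.distrib sum_distrib_left)
  also have "\<dots> \<le> (\<Sum>a\<in>A. \<phi> (x a))"
    using secant_shift_decomposition(1)[OF concave zero \<open>0 < t\<close>] assms(4)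
    by (intro sum_mono) (simp add: c_def)
  finally show ?thesis .
qed

text \<open>Karamata's inequality, with majorization expressed through the hinge functions
  \<open>y \<mapsto> max 0 (y - t)\<close>. The proof is by induction on the number of positive \<open>r b\<close>:
  if \<open>t\<close> is the least of them, the secant shift at \<open>t\<close> removes the linear part of
  \<open>\<phi>\<close> on \<open>[0, t]\<close> and maps \<open>r\<close> to a vector with fewer positive entries. The shifted
  function is nonpositive, which is why the equal-sum hypothesis may be traded for it.\<close>

lemma karamata_hinge:
  fixes \<phi> :: "real \<Rightarrow> real" and x :: "'a \<Rightarrow> real" and r :: "'b \<Rightarrow> real"
  assumes "finite A" "finite B"
    and "concave_on {0..} \<phi>" "\<phi> 0 = 0"
    and "\<forall>a\<in>A. 0 \<le> x a" "\<forall>b\<in>B. 0 \<le> r b"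
    and "\<forall>t\<ge>0. (\<Sum>a\<in>A. max 0 (x a - t)) \<le> (\<Sum>b\<in>B. max 0 (r b - t))"
    and "(\<Sum>a\<in>A. x a) = (\<Sum>b\<in>B. r b) \<or> (\<forall>y\<ge>0. \<phi> y \<le> 0)"
  shows "(\<Sum>b\<in>B. \<phi> (r b)) \<le> (\<Sum>a\<in>A. \<phi> (x a))"
  using assms(3-)
proof (induction "card {b\<in>B. 0 < r b}" arbitrary: \<phi> x r rule: less_induct)
  case less
  note concave = less.prems(1) and zero = less.prems(2)
    and x_nonneg = less.prems(3) and r_nonneg = less.prems(4) and hinge = less.prems(5)
  have sum_le: "(\<Sum>a\<in>A. x a) \<le> (\<Sum>b\<in>B. r b)"
    using hinge x_nonneg r_nonneg by (auto dest: spec[of _ 0])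
  show ?case
  proof (cases "{b\<in>B. 0 < r b} = {}")
    case True
    then have r_zero: "\<forall>b\<in>B. r b = 0" using r_nonneg by force
    then have "(\<Sum>a\<in>A. x a) = 0" using sum_le x_nonneg by (simp add: antisym sum_nonneg)
    then have "\<forall>a\<in>A. x a = 0" using x_nonneg assms(1) by (simp add: sum_nonneg_eq_0_iff)
    then show ?thesis using r_zero zero by simp
  next
    case False
    define P where "P = {b\<in>B. 0 < r b}"
    define t where "t = Min (r ` P)"
    have "finite P" using assms(2) by (simp add: P_def)
    then have "t \<in> r ` P" and t_le: "\<And>b. b \<in> P \<Longrightarrow> t \<le> r b"
      using False by (auto simp: t_def P_def)
    then obtain b0 where b0: "b0 \<in> P" "r b0 = t" by blast
    have "0 < t" using b0 by (simp add: P_def)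
    define x' where "x' = (\<lambda>a. max 0 (x a - t))"
    define r' where "r' = (\<lambda>b. max 0 (r b - t))"
    have "{b\<in>B. 0 < r' b} \<subseteq> P" using \<open>0 < t\<close> by (auto simp: r'_def P_def)
    moreover have "b0 \<notin> {b\<in>B. 0 < r' b}" using b0 by (simp add: r'_def)
    ultimately have "{b\<in>B. 0 < r' b} \<subset> P" using b0(1) by blast
    then have fewer: "card {b\<in>B. 0 < r' b} < card P"
      using \<open>finite P\<close> by (simp add: psubset_card_mono)
    have "(\<Sum>b\<in>B. secant_shift \<phi> t (r' b)) \<le> (\<Sum>a\<in>A. secant_shift \<phi> t (x' a))"
    proof (rule less.hyps[OF fewer[unfolded P_def]])
      show "concave_on {0..} (secant_shift \<phi> t)"
        using concave \<open>0 < t\<close> by (simp add: concave_on_secant_shift)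
      show "secant_shift \<phi> t 0 = 0" using \<open>0 < t\<close> by (simp add: secant_shift_zero)
      show "\<forall>a\<in>A. 0 \<le> x' a" "\<forall>b\<in>B. 0 \<le> r' b" by (simp_all add: x'_def r'_def)
      have "max 0 (max 0 (y - t) - s) = max 0 (y - (t + s))" if "0 \<le> s" for y s :: real
        using that by auto
      then show "\<forall>s\<ge>0. (\<Sum>a\<in>A. max 0 (x' a - s)) \<le> (\<Sum>b\<in>B. max 0 (r' b - s))"
        using hinge \<open>0 < t\<close> by (simp add: x'_def r'_def)
      show "(\<Sum>a\<in>A. x' a) = (\<Sum>b\<in>B. r' b) \<or> (\<forall>y\<ge>0. secant_shift \<phi> t y \<le> 0)"
        using secant_shift_nonpos[OF concave zero \<open>0 < t\<close>] by blast
    qed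
    moreover have "\<forall>b\<in>B. r b = 0 \<or> t \<le> r b"
      using t_le r_nonneg by (force simp: P_def)
    ultimately show ?thesis
      using karamata_secant_shift_step[OF concave zero \<open>0 < t\<close> x_nonneg _ sum_le less.prems(6)]
      by (simp add: x'_def r'_def)
  qed
qed

lemma prob_vecD:
  assumes "prob_vec n p"
  shows "\<forall>i<n. 0 \<le> p i" and "(\<Sum>i<n. p i) = 1"
    and "\<forall>i j. i \<le> j \<longrightarrow> j < n \<longrightarrow> p j \<le> p i"
  using assms by (simp_all add: prob_vec_def)

lemma sum_maj_meet_lessThan:
  "(\<Sum>i<m. maj_meet p q i) = min (\<Sum>j<m. p j) (\<Sum>j<m. q j)"
  unfolding maj_meet_def
  by (subst sum_lessThan_telescope[where f = "\<lambda>k. min (\<Sum>j<k. p j) (\<Sum>j<k. q j)"]) simp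

lemma maj_meet_nonneg: "0 \<le> p i \<Longrightarrow> 0 \<le> q i \<Longrightarrow> 0 \<le> maj_meet p q i"
  by (simp add: maj_meet_def min_le_iff_disj)

lemma sum_le_prefix_sum_if_antimono:
  fixes p :: "nat \<Rightarrow> real"
  assumes "\<forall>i<n. 0 \<le> p i" "\<forall>i j. i \<le> j \<longrightarrow> j < n \<longrightarrow> p j \<le> p i"
    and "I \<subseteq> {..<n}" "card I \<le> m" "m \<le> n"
  shows "(\<Sum>i\<in>I. p i) \<le> (\<Sum>i<m. p i)"
proof (cases "m = 0")
  case True
  then show ?thesis using assms(3,4) finite_subset[OF assms(3)] by simp
next
  case False
  define v where "v = p (m - 1)"
  have "finite I" using assms(3) finite_subset by blast
  have "card (I - {..<m}) \<le> card ({..<m} - I)"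
    using assms(4) \<open>finite I\<close> by (simp add: card_Diff_subset_Int Int_commute)
  moreover have "0 \<le> v" using assms(1,5) False by (simp add: v_def)
  ultimately have "(\<Sum>i\<in>I - {..<m}. v) \<le> (\<Sum>i\<in>{..<m} - I. v)"
    by (simp add: mult_right_mono)
  moreover have "(\<Sum>i\<in>I - {..<m}. p i) \<le> (\<Sum>i\<in>I - {..<m}. v)"
    using assms(2,3) False by (intro sum_mono) (auto simp: v_def)
  moreover have "(\<Sum>i\<in>{..<m} - I. v) \<le> (\<Sum>i\<in>{..<m} - I. p i)"
    using assms(2,5) False by (intro sum_mono) (auto simp: v_def)
  ultimately have "(\<Sum>i\<in>I - {..<m}. p i) \<le> (\<Sum>i\<in>{..<m} - I. p i)" by linarith
  moreover have "(\<Sum>i\<in>I. p i) = (\<Sum>i\<in>I \<inter> {..<m}. p i) + (\<Sum>i\<in>I - {..<m}. p i)"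
    using \<open>finite I\<close> by (metis sum.Int_Diff)
  moreover have "(\<Sum>i<m. p i) = (\<Sum>i\<in>I \<inter> {..<m}. p i) + (\<Sum>i\<in>{..<m} - I. p i)"
    by (metis finite_lessThan sum.Int_Diff Int_commute)
  ultimately show ?thesis by linarith
qed

text \<open>Cells of the product distribution in \<open>S\<close> occupy at most \<open>card S\<close> rows.\<close>

lemma sum_product_cells_le_prefix_sum:
  assumes "prob_vec n p" "prob_vec n q" "S \<subseteq> {..<n} \<times> {..<n}"
  shows "(\<Sum>(i, j)\<in>S. p i * q j) \<le> (\<Sum>i<min (card S) n. p i)"
proof -
  have "finite S" using assms(3) finite_subset by blast
  have rows: "fst ` S \<subseteq> {..<n}" using assms(3) by auto
  have "(\<Sum>(i, j)\<in>S. p i * q j) \<le> (\<Sum>(i, j)\<in>fst ` S \<times> {..<n}. p i * q j)"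
    using assms(3) rows prob_vecD(1)[OF assms(1)] prob_vecD(1)[OF assms(2)] \<open>finite S\<close>
    by (intro sum_mono2) (auto intro: rev_image_eqI)
  also have "\<dots> = (\<Sum>i\<in>fst ` S. p i)"
    by (simp add: sum.cartesian_product[symmetric] sum_distrib_left[symmetric] prob_vecD(2)[OF assms(2)])
  also have "\<dots> \<le> (\<Sum>i<min (card S) n. p i)"
    using prob_vecD(1,3)[OF assms(1)] rows card_image_le[OF \<open>finite S\<close>, of fst]
      card_mono[OF _ rows]
    by (intro sum_le_prefix_sum_if_antimono) auto
  finally show ?thesis .
qed

lemma sum_product_cells_le_meet_prefix_sum:
  assumes "prob_vec n p" "prob_vec n q" "S \<subseteq> {..<n} \<times> {..<n}"
  shows "(\<Sum>(i, j)\<in>S. p i * q j) \<le> (\<Sum>k<min (card S) n. maj_meet p q k)"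
proof -
  have "(\<Sum>(i, j)\<in>S. p i * q j) = (\<Sum>(j, i)\<in>prod.swap ` S. q j * p i)"
    by (simp add: sum.reindex case_prod_beta mult.commute)
  also have "\<dots> \<le> (\<Sum>j<min (card S) n. q j)"
    using sum_product_cells_le_prefix_sum[OF assms(2,1), of "prod.swap ` S"] assms(3)
    by (force simp: card_image)
  finally show ?thesis
    using sum_product_cells_le_prefix_sum[OF assms] by (simp add: sum_maj_meet_lessThan)
qed

lemma sum_hinge_product_le_sum_hinge_maj_meet:
  assumes "prob_vec n p" "prob_vec n q" "0 \<le> t"
  shows "(\<Sum>(i, j)\<in>{..<n} \<times> {..<n}. max 0 (p i * q j - t))
    \<le> (\<Sum>k<n. max 0 (maj_meet p q k - t))"
proof -
  define S where "S = {(i, j) \<in> {..<n} \<times> {..<n}. t < p i * q j}"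
  define m where "m = min (card S) n"
  have "S \<subseteq> {..<n} \<times> {..<n}" by (auto simp: S_def)
  have "(\<Sum>(i, j)\<in>{..<n} \<times> {..<n}. max 0 (p i * q j - t))
      = (\<Sum>(i, j)\<in>S. max 0 (p i * q j - t))"
    by (rule sum.mono_neutral_right) (auto simp: S_def)
  also have "\<dots> = (\<Sum>(i, j)\<in>S. p i * q j - t)"
    by (rule sum.cong) (auto simp: S_def)
  also have "\<dots> = (\<Sum>(i, j)\<in>S. p i * q j) - card S * t"
    by (simp add: sum_subtractf case_prod_beta)
  also have "\<dots> \<le> (\<Sum>k<m. maj_meet p q k) - m * t"
  proof -
    have "real m * t \<le> card S * t" using assms(3) by (intro mult_right_mono) (auto simp: m_def)
    then show ?thesis
      using sum_product_cells_le_meet_prefix_sum[OF assms(1,2) \<open>S \<subseteq> _\<close>] by (simp add: m_def)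
  qed
  also have "\<dots> = (\<Sum>k<m. maj_meet p q k - t)" by (simp add: sum_subtractf)
  also have "\<dots> \<le> (\<Sum>k<n. max 0 (maj_meet p q k - t))"
    by (intro order.trans[OF sum_mono sum_mono2]) (auto simp: m_def)
  finally show ?thesis .
qed

lemma sum_concave_maj_meet_le_sum_product:
  assumes "prob_vec n p" "prob_vec n q" "concave_on {0..} \<phi>" "\<phi> 0 = 0"
  shows "(\<Sum>k<n. \<phi> (maj_meet p q k)) \<le> (\<Sum>(i, j)\<in>{..<n} \<times> {..<n}. \<phi> (p i * q j))"
proof -
  have "(\<Sum>(i, j)\<in>{..<n} \<times> {..<n}. p i * q j) = (\<Sum>i<n. p i)"
    by (simp add: sum.cartesian_product[symmetric] sum_distrib_left[symmetric] prob_vecD(2)[OF assms(2)])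
  then have "(\<Sum>(i, j)\<in>{..<n} \<times> {..<n}. p i * q j) = (\<Sum>k<n. maj_meet p q k)"
    using prob_vecD(2)[OF assms(1)] prob_vecD(2)[OF assms(2)] by (simp add: sum_maj_meet_lessThan)
  then show ?thesis
    using karamata_hinge[OF _ _ assms(3,4), where A = "{..<n} \<times> {..<n}" and B = "{..<n}"
        and x = "\<lambda>(i, j). p i * q j" and r = "maj_meet p q"]
      sum_hinge_product_le_sum_hinge_maj_meet[OF assms(1,2)]
      prob_vecD(1)[OF assms(1)] prob_vecD(1)[OF assms(2)] maj_meet_nonneg[of p _ q]
    by (simp add: split_def)
qed

text \<open>Unlike \<^const>\<open>prob_vec\<close>, no ordering is required: the meet is only shown to be of
  this kind.\<close>

definition is_distribution :: "nat \<Rightarrow> (nat \<Rightarrow> real) \<Rightarrow> bool" where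
  "is_distribution n v \<longleftrightarrow> (\<forall>i<n. 0 \<le> v i) \<and> (\<Sum>i<n. v i) = 1"

lemma is_distribution_if_prob_vec: "prob_vec n p \<Longrightarrow> is_distribution n p"
  by (simp add: prob_vec_def is_distribution_def)

lemma is_distribution_maj_meet:
  assumes "prob_vec n p" "prob_vec n q"
  shows "is_distribution n (maj_meet p q)"
  using prob_vecD(1,2)[OF assms(1)] prob_vecD(1,2)[OF assms(2)]
  by (simp add: is_distribution_def maj_meet_nonneg sum_maj_meet_lessThan)

lemma is_distribution_le_one:
  assumes "is_distribution n v" "i < n"
  shows "v i \<le> 1"
proof -
  have "v i \<le> (\<Sum>j<n. v j)"
    using assms by (intro member_le_sum) (auto simp: is_distribution_def)
  then show ?thesis using assms(1) by (simp add: is_distribution_def)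
qed

lemma sum_powr_pos:
  assumes "is_distribution n v"
  shows "0 < (\<Sum>i<n. v i powr a)"
proof -
  have "\<exists>i<n. v i \<noteq> 0"
  proof (rule ccontr)
    assume "\<not> (\<exists>i<n. v i \<noteq> 0)"
    then have "(\<Sum>i<n. v i) = 0" by simp
    with assms show False by (simp add: is_distribution_def)
  qed
  then obtain i where "i < n" "v i \<noteq> 0" by blast
  then have "0 < v i powr a" by simp
  also have "\<dots> \<le> (\<Sum>i<n. v i powr a)"
    using \<open>i < n\<close> by (intro member_le_sum) auto
  finally show ?thesis .
qed

lemma one_le_sum_powr:
  assumes "is_distribution n v" "0 \<le> a" "a \<le> 1"
  shows "1 \<le> (\<Sum>i<n. v i powr a)"
proof -
  have "v i \<le> v i powr a" if "i < n" for i
    using powr_mono'[OF assms(3), of "v i"] is_distribution_le_one[OF assms(1) that] assms(1) that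
    by (cases "v i = 0") (auto simp: is_distribution_def)
  then have "(\<Sum>i<n. v i) \<le> (\<Sum>i<n. v i powr a)" by (intro sum_mono) auto
  then show ?thesis using assms(1) by (simp add: is_distribution_def)
qed

lemma sum_powr_le_one:
  assumes "is_distribution n v" "1 \<le> a"
  shows "(\<Sum>i<n. v i powr a) \<le> 1"
proof -
  have "v i powr a \<le> v i" if "i < n" for i
    using powr_le_one_le[of "v i" a] is_distribution_le_one[OF assms(1) that] assms that
    by (cases "v i = 0") (auto simp: is_distribution_def)
  then have "(\<Sum>i<n. v i powr a) \<le> (\<Sum>i<n. v i)" by (intro sum_mono) auto
  then show ?thesis using assms(1) by (simp add: is_distribution_def)
qed

lemma shannon_nonneg:
  assumes "is_distribution n v"
  shows "0 \<le> shannon n v"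
proof -
  have "v i * ln (v i) \<le> 0" if "i < n" for i
    using is_distribution_le_one[OF assms that] assms that
    by (cases "v i = 0") (auto simp: is_distribution_def mult_nonneg_nonpos)
  then have "(\<Sum>i<n. v i * ln (v i)) \<le> 0" by (intro sum_nonpos) simp
  then show ?thesis by (simp add: shannon_def)
qed

lemma shannon_product:
  assumes "is_distribution n p" "is_distribution n q"
  shows "(\<Sum>(i, j)\<in>{..<n} \<times> {..<n}. - (p i * q j * ln (p i * q j))) = shannon n p + shannon n q"
proof -
  have "x * y * ln (x * y) = x * ln x * y + x * (y * ln y)" for x y :: real
    by (simp add: ln_mult algebra_simps)
  then have "(\<Sum>(i, j)\<in>{..<n} \<times> {..<n}. p i * q j * ln (p i * q j))
      = (\<Sum>i<n. p i * ln (p i)) * (\<Sum>j<n. q j) + (\<Sum>i<n. p i) * (\<Sum>j<n. q j * ln (q j))"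
    by (simp add: sum_product sum.distrib flip: sum.cartesian_product)
  then show ?thesis
    using assms by (simp add: is_distribution_def shannon_def sum_negf case_prod_unfold)
qed

definition renyi :: "real \<Rightarrow> nat \<Rightarrow> (nat \<Rightarrow> real) \<Rightarrow> real" where
  "renyi \<alpha> n p = (if \<alpha> = 1 then shannon n p else ln (\<Sum>i<n. p i powr \<alpha>) / (1 - \<alpha>))"

lemma renyi_nonneg:
  assumes "is_distribution n v" "0 \<le> \<alpha>"
  shows "0 \<le> renyi \<alpha> n v"
proof (cases \<alpha> "1 :: real" rule: linorder_cases)
  case less
  then show ?thesis
    using one_le_sum_powr[OF assms(1,2)] by (simp add: renyi_def)
next
  case equal
  then show ?thesis using shannon_nonneg[OF assms(1)] by (simp add: renyi_def)
next
  case greater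
  then have "ln (\<Sum>i<n. v i powr \<alpha>) \<le> 0"
    using sum_powr_le_one[OF assms(1)] sum_powr_pos[OF assms(1)] by simp
  then show ?thesis
    using greater by (simp add: renyi_def divide_nonpos_neg)
qed

lemma renyi_maj_meet_le:
  assumes "prob_vec n p" "prob_vec n q" "0 \<le> \<alpha>"
  shows "renyi \<alpha> n (maj_meet p q) \<le> renyi \<alpha> n p + renyi \<alpha> n q"
proof -
  define r where "r = maj_meet p q"
  have dist: "is_distribution n p" "is_distribution n q" "is_distribution n r"
    using assms by (simp_all add: is_distribution_if_prob_vec is_distribution_maj_meet r_def)
  let ?A = "\<lambda>v. \<Sum>i<n. v i powr \<alpha>"
  have pos: "0 < ?A p" "0 < ?A q" "0 < ?A r"
    using dist by (simp_all add: sum_powr_pos)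
  consider "\<alpha> < 1" | "\<alpha> = 1" | "1 < \<alpha>" by linarith
  then show ?thesis
  proof cases
    case 1
    have "?A r \<le> ?A p * ?A q"
      using sum_concave_maj_meet_le_sum_product[OF assms(1,2) concave_on_powr[OF assms(3)]] 1
      by (simp add: r_def powr_mult sum_product flip: sum.cartesian_product)
    then have "ln (?A r) \<le> ln (?A p) + ln (?A q)"
      using pos by (simp add: ln_mult_pos[symmetric])
    then show ?thesis
      using 1 by (simp add: renyi_def r_def divide_right_mono add_divide_distrib[symmetric])
  next
    case 2
    then show ?thesis
      using sum_concave_maj_meet_le_sum_product[OF assms(1,2) concave_on_neg_mult_ln]
        shannon_product[OF dist(1,2)]
      by (simp add: renyi_def shannon_def sum_negf)
  next
    case 3
    have "?A p * ?A q \<le> ?A r"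
      using sum_concave_maj_meet_le_sum_product[OF assms(1,2) concave_on_neg_powr[of \<alpha>]] 3
      by (simp add: r_def powr_mult sum_product sum_negf flip: sum.cartesian_product)
    then have "ln (?A p) + ln (?A q) \<le> ln (?A r)"
      using pos by (simp add: ln_mult_pos[symmetric])
    then show ?thesis
      using 3 by (simp add: renyi_def r_def divide_right_mono_neg add_divide_distrib[symmetric])
  qed
qed

lemma sharma_mittal_eq_renyi:
  assumes "is_distribution n v"
  shows "sharma_mittal \<alpha> \<beta> n v =
    (if \<beta> = 1 then renyi \<alpha> n v else 1 / (1 - \<beta>) * (exp ((1 - \<beta>) * renyi \<alpha> n v) - 1))"
proof -
  have "(\<Sum>i<n. v i powr \<alpha>) powr ((1 - \<beta>) / (1 - \<alpha>))
      = exp ((1 - \<beta>) * (ln (\<Sum>i<n. v i powr \<alpha>) / (1 - \<alpha>)))"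
    using sum_powr_pos[OF assms, of \<alpha>] by (simp add: powr_def[of "\<Sum>i<n. v i powr \<alpha>"])
  then show ?thesis by (simp add: sharma_mittal_def renyi_def)
qed

text \<open>\<open>(exp ((1 - \<beta>) x) - 1) / (1 - \<beta>)\<close> is the Tsallis \<open>\<beta>\<close>-logarithm of \<open>exp x\<close>.\<close>

lemma tsallis_log_exp_le_add:
  fixes \<beta> x y z :: real
  assumes "1 < \<beta>" "0 \<le> x" "0 \<le> y" "z \<le> x + y"
  shows "1 / (1 - \<beta>) * (exp ((1 - \<beta>) * z) - 1)
    \<le> 1 / (1 - \<beta>) * (exp ((1 - \<beta>) * x) - 1) + 1 / (1 - \<beta>) * (exp ((1 - \<beta>) * y) - 1)"
proof -
  define X Y where "X = exp ((1 - \<beta>) * x)" and "Y = exp ((1 - \<beta>) * y)"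
  have "X \<le> 1" "Y \<le> 1"
    using assms by (simp_all add: X_def Y_def mult_nonpos_nonneg)
  then have "X + Y - 1 \<le> X * Y"
    using mult_nonneg_nonneg[of "1 - X" "1 - Y"] by (simp add: algebra_simps)
  also have "\<dots> = exp ((1 - \<beta>) * (x + y))"
    by (simp add: X_def Y_def distrib_left exp_add)
  also have "\<dots> \<le> exp ((1 - \<beta>) * z)"
    using assms by (simp add: mult_left_mono_neg)
  finally have "X + Y - 1 \<le> exp ((1 - \<beta>) * z)" .
  then show ?thesis
    using assms(1) by (simp add: X_def Y_def divide_simps)
qed

theorem corollary1:
  fixes n :: nat and \<alpha> \<beta> :: real and p q :: "nat \<Rightarrow> real"
  assumes "0 \<le> \<alpha>" and "1 \<le> \<beta>"
    and "prob_vec n p" and "prob_vec n q"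
  shows "sharma_mittal \<alpha> \<beta> n (maj_meet p q)
           \<le> sharma_mittal \<alpha> \<beta> n p + sharma_mittal \<alpha> \<beta> n q"
proof -
  have dist: "is_distribution n p" "is_distribution n q" "is_distribution n (maj_meet p q)"
    using assms(3,4) by (simp_all add: is_distribution_if_prob_vec is_distribution_maj_meet)
  note sharma_mittal = sharma_mittal_eq_renyi[OF dist(1)] sharma_mittal_eq_renyi[OF dist(2)]
    sharma_mittal_eq_renyi[OF dist(3)]
  have meet_le: "renyi \<alpha> n (maj_meet p q) \<le> renyi \<alpha> n p + renyi \<alpha> n q"
    using renyi_maj_meet_le[OF assms(3,4,1)] .
  have nonneg: "0 \<le> renyi \<alpha> n p" "0 \<le> renyi \<alpha> n q"
    using renyi_nonneg[OF _ assms(1)] dist by simp_all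
  show ?thesis
  proof (cases "\<beta> = 1")
    case True
    then show ?thesis using meet_le by (simp add: sharma_mittal)
  next
    case False
    then have "1 < \<beta>" using assms(2) by simp
    then show ?thesis
      using tsallis_log_exp_le_add[OF _ nonneg meet_le] False by (simp add: sharma_mittal)
  qed
qed

end
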